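(* Let $(Y,\|\ \|)$ be a normed $K$-vector space with an orthogonal basis $\{x_\ell\}_{\ell\in I}$ (i.e. $\|\sum c_\ell x_\ell\|=\sup_\ell|c_\ell|\,\|x_\ell\|$ for all vectors $\sum c_\ell x_\ell\in Y$), and let $\le$ be a partial order on $I$ such that every nonempty subset of $I$ has a minimal element and $\{\ell\in I:\ell\le k\}$ is finite for every $k\in I$. Suppose $\|x_\ell\|\le\|x_k\|$ whenever $\ell\le k$, and let $c_{\ell k}\in K$ with $|c_{\ell k}|\le1$ be given for all $\ell\le k$. Then the vectors $y_k:=x_k+\sum_{\ell<k}c_{\ell k}x_\ell$ ($k\in I$) form another orthogonal basis of $Y$, and $\|y_k\|=\|x_k\|$.
   Context: $K$ is a complete extension field of $\mathbb{Q}_p$ with absolute value $|\ |$. A basis means an algebraic basis of the vector space $Y$. *)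

theory Defs
  imports "HOL-Analysis.Analysis" "HOL-Computational_Algebra.Primes"
begin

text \<open>A complete non-archimedean valued field of characteristic 0 whose absolute value
  restricts to the (normalised) p-adic absolute value on the rationals, i.e. a complete
  extension field of Q_p.\<close>
definition complete_ext_Qp :: "('k::field_char_0 \<Rightarrow> real) \<Rightarrow> nat \<Rightarrow> bool" where
  "complete_ext_Qp absK p \<longleftrightarrow>
     prime p \<and>
     (\<forall>a. 0 \<le> absK a) \<and>
     (\<forall>a. absK a = 0 \<longleftrightarrow> a = 0) \<and>
     (\<forall>a b. absK (a * b) = absK a * absK b) \<and>
     (\<forall>a b. absK (a + b) \<le> max (absK a) (absK b)) \<and>
     absK (of_nat p) = 1 / real p \<and>
     (\<forall>f :: nat \<Rightarrow> 'k.
        (\<forall>e>0. \<exists>N. \<forall>m\<ge>N. \<forall>n\<ge>N. absK (f m - f n) < e) \<longrightarrow>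
        (\<exists>L. \<forall>e>0. \<exists>N. \<forall>n\<ge>N. absK (f n - L) < e))"

definition is_norm :: "('k::field \<Rightarrow> real) \<Rightarrow> ('k \<Rightarrow> 'v::ab_group_add \<Rightarrow> 'v) \<Rightarrow> ('v \<Rightarrow> real) \<Rightarrow> bool" where
  "is_norm absK smul nrm \<longleftrightarrow>
     (\<forall>v. 0 \<le> nrm v) \<and>
     (\<forall>v. nrm v = 0 \<longleftrightarrow> v = 0) \<and>
     (\<forall>a v. nrm (smul a v) = absK a * nrm v) \<and>
     (\<forall>v w. nrm (v + w) \<le> max (nrm v) (nrm w))"

definition is_basis_family :: "('k::field \<Rightarrow> 'v::ab_group_add \<Rightarrow> 'v) \<Rightarrow> ('i \<Rightarrow> 'v) \<Rightarrow> bool" where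
  "is_basis_family smul x \<longleftrightarrow>
     inj x \<and> \<not> module.dependent smul (range x) \<and> module.span smul (range x) = UNIV"

text \<open>Orthogonality: the norm of every finite linear combination is the sup of the
  norms of its terms (the sup over the remaining indices, with zero coefficient, is 0).\<close>
definition orthogonal_family ::
  "('k::field \<Rightarrow> real) \<Rightarrow> ('k \<Rightarrow> 'v::ab_group_add \<Rightarrow> 'v) \<Rightarrow> ('v \<Rightarrow> real) \<Rightarrow> ('i \<Rightarrow> 'v) \<Rightarrow> bool" where
  "orthogonal_family absK smul nrm x \<longleftrightarrow>
     (\<forall>F c. finite F \<longrightarrow>
        nrm (\<Sum>l\<in>F. smul (c l) (x l)) = Max (insert 0 ((\<lambda>l. absK (c l) * nrm (x l)) ` F)))"

definition orthogonal_basis ::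
  "('k::field \<Rightarrow> real) \<Rightarrow> ('k \<Rightarrow> 'v::ab_group_add \<Rightarrow> 'v) \<Rightarrow> ('v \<Rightarrow> real) \<Rightarrow> ('i \<Rightarrow> 'v) \<Rightarrow> bool" where
  "orthogonal_basis absK smul nrm x \<longleftrightarrow>
     is_basis_family smul x \<and> orthogonal_family absK smul nrm x"

end

theory Submission
  imports Defs
begin

(* Write y_k = sum_l e_lk x_l with e unitriangular, and for a finite combination sum_k a_k y_k
   let M = max_k |a_k| ||x_k||. The coefficient of x_l in it is b_l = sum_k a_k e_lk, and each
   term satisfies |a_k e_lk| ||x_l|| <= |a_k| ||x_k|| <= M, so ||sum_k a_k y_k|| <= M by the
   ultrametric inequality. Conversely, let k0 be maximal among the k attaining M: in
   b_k0 = a_k0 + sum_{k > k0} a_k e_k0k every term of the sum has |a_k e_k0k| ||x_k0|| < M,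
   so the dominant term wins and |b_k0| ||x_k0|| = M. Thus the y_k are orthogonal with ||y_k|| = ||x_k||,
   and they span because x_k = y_k - sum_{l < k} c_lk x_l, by well-founded induction.
   Only multiplicativity and the ultrametric inequality of |.|, well-foundedness of the strict
   order and finiteness of the down-sets are used. *)

lemma wf_strict_if_has_minimal:
  fixes le :: "'a \<Rightarrow> 'a \<Rightarrow> bool"
  assumes "\<And>S. S \<noteq> {} \<Longrightarrow> \<exists>m\<in>S. \<forall>l\<in>S. le l m \<longrightarrow> l = m"
  shows "wf {(l, k). le l k \<and> l \<noteq> k}"
proof (rule wfI_min)
  fix l :: 'a and Q
  assume "l \<in> Q"
  then obtain m where "m \<in> Q" "\<forall>l\<in>Q. le l m \<longrightarrow> l = m"
    using assms by blast
  then show "\<exists>m\<in>Q. \<forall>l. (l, m) \<in> {(l, k). le l k \<and> l \<noteq> k} \<longrightarrow> l \<notin> Q"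
    by blast
qed

lemma finite_wf_has_maximal:
  assumes "wf R" "finite S" "S \<noteq> {}"
  shows "\<exists>m\<in>S. \<forall>k\<in>S. (m, k) \<notin> R"
proof -
  have "finite (R \<inter> S \<times> S)"
    using assms(2) by (blast intro: finite_subset)
  moreover have "wf (R \<inter> S \<times> S)"
    using assms(1) by (rule wf_subset) blast
  ultimately have "wf ((R \<inter> S \<times> S)\<inverse>)"
    by (blast intro: finite_acyclic_wf_converse wf_acyclic)
  moreover obtain s where "s \<in> S"
    using assms(3) by blast
  ultimately obtain m where "m \<in> S" "\<And>k. (k, m) \<in> (R \<inter> S \<times> S)\<inverse> \<Longrightarrow> k \<notin> S"
    by (rule wfE_min) blast
  then show ?thesis
    by blast
qed

locale nonarch_normed_space = vector_space smul
  for smul :: "'k::field \<Rightarrow> 'v::ab_group_add \<Rightarrow> 'v" +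
  fixes absK :: "'k \<Rightarrow> real" and nrm :: "'v \<Rightarrow> real"
  assumes absK_nonneg: "0 \<le> absK a"
    and absK_eq_0_iff: "absK a = 0 \<longleftrightarrow> a = 0"
    and absK_mult: "absK (a * b) = absK a * absK b"
    and absK_add_le_max: "absK (a + b) \<le> max (absK a) (absK b)"
    and is_norm_nrm: "is_norm absK smul nrm"
begin

lemma absK_0 [simp]: "absK 0 = 0"
  by (simp add: absK_eq_0_iff)

lemma absK_1 [simp]: "absK 1 = 1"
  using absK_mult[of 1 1] absK_eq_0_iff[of 1] by simp

lemma absK_minus [simp]: "absK (- a) = absK a"
proof -
  have "absK (- 1) * absK (- 1) = 1"
    using absK_mult[of "- 1" "- 1"] by simp
  then have "absK (- 1) = 1"
    using absK_nonneg[of "- 1"] by (metis abs_of_nonneg abs_square_eq_1 power2_eq_square)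
  then show ?thesis
    using absK_mult[of "- 1" a] by simp
qed

lemma absK_add_eq_left:
  assumes "absK b < absK a"
  shows "absK (a + b) = absK a"
proof -
  have "absK a \<le> max (absK (a + b)) (absK (- b))"
    using absK_add_le_max[of "a + b" "- b"] by simp
  then show ?thesis
    using assms absK_add_le_max[of a b] by auto
qed

lemma absK_sum_le_term:
  assumes "finite S" "S \<noteq> {}"
  shows "\<exists>s\<in>S. absK (sum f S) \<le> absK (f s)"
  using assms
proof (induction S rule: finite_ne_induct)
  case (insert t S)
  then obtain s where "s \<in> S" "absK (sum f S) \<le> absK (f s)"
    by blast
  then have "absK (f t + sum f S) \<le> max (absK (f t)) (absK (f s))"
    using absK_add_le_max[of "f t" "sum f S"] by (meson max.mono order_refl order_trans)
  then show ?case
    using insert.hyps \<open>s \<in> S\<close> by (metis insert_iff max_def sum.insert)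
qed simp

lemma absK_sum_mult_le:
  assumes "finite S" "0 \<le> w" "0 \<le> B" "\<And>s. s \<in> S \<Longrightarrow> absK (f s) * w \<le> B"
  shows "absK (sum f S) * w \<le> B"
proof (cases "S = {}")
  case False
  then obtain s where "s \<in> S" "absK (sum f S) \<le> absK (f s)"
    using absK_sum_le_term assms(1) by blast
  then show ?thesis
    using assms(2,4) by (meson mult_right_mono order_trans)
qed (use assms in simp)

lemma absK_sum_mult_less:
  assumes "finite S" "0 \<le> w" "0 < B" "\<And>s. s \<in> S \<Longrightarrow> absK (f s) * w < B"
  shows "absK (sum f S) * w < B"
proof (cases "S = {}")
  case False
  then obtain s where "s \<in> S" "absK (sum f S) \<le> absK (f s)"
    using absK_sum_le_term assms(1) by blast
  then show ?thesis
    using assms(2,4) by (meson mult_right_mono order_le_less_trans)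
qed (use assms in simp)

lemma nrm_nonneg: "0 \<le> nrm v"
  and nrm_eq_0_iff: "nrm v = 0 \<longleftrightarrow> v = 0"
  using is_norm_nrm unfolding is_norm_def by auto

lemma orthogonal_family_coeff_eq_0:
  assumes y: "orthogonal_family absK smul nrm y"
    and "finite F" "(\<Sum>k\<in>F. smul (a k) (y k)) = 0" "k \<in> F" "y k \<noteq> 0"
  shows "a k = 0"
proof -
  have "absK (a k) * nrm (y k) \<le> Max (insert 0 ((\<lambda>l. absK (a l) * nrm (y l)) ` F))"
    using assms(2,4) by (intro Max_ge) auto
  also have "\<dots> = nrm (\<Sum>l\<in>F. smul (a l) (y l))"
    using y assms(2) unfolding orthogonal_family_def by simp
  also have "\<dots> = 0"
    using assms(3) nrm_eq_0_iff by simp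
  finally show ?thesis
    using assms(5) nrm_nonneg[of "y k"] nrm_eq_0_iff[of "y k"] absK_nonneg[of "a k"]
      absK_eq_0_iff[of "a k"] by (simp add: mult_le_0_iff)
qed

lemma orthogonal_family_inj:
  assumes y: "orthogonal_family absK smul nrm y" and nonzero: "\<And>k. y k \<noteq> 0"
  shows "inj y"
proof (rule injI, rule ccontr)
  fix k j
  assume "y k = y j" "k \<noteq> j"
  then have "(\<Sum>i\<in>{k, j}. smul (if i = k then 1 else - 1) (y i)) = 0"
    by (simp add: scale_minus_left)
  from orthogonal_family_coeff_eq_0[OF y _ this _ nonzero, of k] show False
    by simp
qed

lemma orthogonal_family_independent:
  assumes y: "orthogonal_family absK smul nrm y" and nonzero: "\<And>k. y k \<noteq> 0"
  shows "\<not> dependent (range y)"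
proof
  assume "dependent (range y)"
  then obtain t u v where t: "finite t" "t \<subseteq> range y" "(\<Sum>v\<in>t. smul (u v) v) = 0"
    and v: "v \<in> t" "u v \<noteq> 0"
    unfolding dependent_explicit by blast
  define F where "F = y -` t"
  have inj: "inj y"
    using orthogonal_family_inj[OF y nonzero] .
  have F: "finite F" "t = y ` F"
    using t(1,2) inj by (auto simp: F_def finite_vimageI)
  have "(\<Sum>k\<in>F. smul (u (y k)) (y k)) = 0"
    using t(3) F(2) sum.reindex[OF inj_on_subset[OF inj], of F "\<lambda>v. smul (u v) v"] by simp
  moreover obtain k where "k \<in> F" "v = y k"
    using v(1) F(2) by blast
  ultimately show False
    using orthogonal_family_coeff_eq_0[OF y F(1)] nonzero v(2) by metis
qed

end

locale unitriangular_change = nonarch_normed_space smul absK nrm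
  for smul :: "'k::field \<Rightarrow> 'v::ab_group_add \<Rightarrow> 'v" and absK nrm +
  fixes x :: "'i \<Rightarrow> 'v" and e :: "'i \<Rightarrow> 'i \<Rightarrow> 'k" and R :: "('i \<times> 'i) set"
  assumes orthogonal_x: "orthogonal_family absK smul nrm x"
    and wf_R: "wf R"
    and e_diag: "e k k = 1"
    and e_below: "e l k \<noteq> 0 \<Longrightarrow> l \<noteq> k \<Longrightarrow> (l, k) \<in> R"
    and e_column_finite: "finite {l. e l k \<noteq> 0}"
    and e_small: "absK (e l k) * nrm (x l) \<le> nrm (x k)"
begin

definition y :: "'i \<Rightarrow> 'v" where
  "y k = (\<Sum>l | e l k \<noteq> 0. smul (e l k) (x l))"

lemma y_eq_sum:
  assumes "finite G" "{l. e l k \<noteq> 0} \<subseteq> G"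
  shows "y k = (\<Sum>l\<in>G. smul (e l k) (x l))"
  unfolding y_def using assms by (intro sum.mono_neutral_left) auto

lemma sum_scale_y:
  assumes "finite F" "finite G" "\<And>k. k \<in> F \<Longrightarrow> {l. e l k \<noteq> 0} \<subseteq> G"
  shows "(\<Sum>k\<in>F. smul (a k) (y k)) = (\<Sum>l\<in>G. smul (\<Sum>k\<in>F. a k * e l k) (x l))"
proof -
  have "(\<Sum>k\<in>F. smul (a k) (y k)) = (\<Sum>k\<in>F. \<Sum>l\<in>G. smul (a k * e l k) (x l))"
    using assms by (intro sum.cong) (simp_all add: y_eq_sum scale_sum_right)
  also have "\<dots> = (\<Sum>l\<in>G. smul (\<Sum>k\<in>F. a k * e l k) (x l))"
    by (subst sum.swap) (simp add: scale_sum_left)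
  finally show ?thesis .
qed

lemma coeff_le_Max:
  assumes "finite F"
  shows "absK (\<Sum>k\<in>F. a k * e l k) * nrm (x l)
    \<le> Max (insert 0 ((\<lambda>k. absK (a k) * nrm (x k)) ` F))" (is "_ \<le> ?M")
proof (rule absK_sum_mult_le[OF assms nrm_nonneg])
  show "0 \<le> ?M"
    using assms by (intro Max_ge) auto
  fix k
  assume "k \<in> F"
  have "absK (a k * e l k) * nrm (x l) = absK (a k) * (absK (e l k) * nrm (x l))"
    by (simp add: absK_mult)
  also have "\<dots> \<le> absK (a k) * nrm (x k)"
    by (intro mult_left_mono e_small absK_nonneg)
  also have "\<dots> \<le> ?M"
    using assms \<open>k \<in> F\<close> by (intro Max_ge) auto
  finally show "absK (a k * e l k) * nrm (x l) \<le> ?M" .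
qed

lemma coeff_attains_Max:
  assumes "finite F"
    and pos: "0 < Max (insert 0 ((\<lambda>k. absK (a k) * nrm (x k)) ` F))" (is "0 < ?M")
  shows "\<exists>l\<in>F. absK (\<Sum>k\<in>F. a k * e l k) * nrm (x l) = ?M"
proof -
  define S where "S = {k \<in> F. absK (a k) * nrm (x k) = ?M}"
  have le_M: "absK (a k) * nrm (x k) \<le> ?M" if "k \<in> F" for k
    using assms(1) that by (intro Max_ge) auto
  have "?M \<in> insert 0 ((\<lambda>k. absK (a k) * nrm (x k)) ` F)"
    using assms(1) by (intro Max_in) auto
  then have "S \<noteq> {}"
    using pos by (auto simp: S_def)
  moreover have "finite S"
    using assms(1) by (simp add: S_def)
  ultimately obtain k0 where k0: "k0 \<in> S" and maximal: "\<And>k. k \<in> S \<Longrightarrow> (k0, k) \<notin> R"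
    using finite_wf_has_maximal[OF wf_R] by meson
  have k0F: "k0 \<in> F" and k0M: "absK (a k0) * nrm (x k0) = ?M"
    using k0 by (auto simp: S_def)
  define r where "r = (\<Sum>k\<in>F - {k0}. a k * e k0 k)"
  have sum_eq: "(\<Sum>k\<in>F. a k * e k0 k) = a k0 + r"
    unfolding r_def by (subst sum.remove[OF assms(1) k0F]) (simp add: e_diag)
  have "absK r * nrm (x k0) < ?M"
    unfolding r_def
  proof (rule absK_sum_mult_less[OF _ nrm_nonneg pos])
    show "finite (F - {k0})"
      using assms(1) by simp
    fix k
    assume k: "k \<in> F - {k0}"
    show "absK (a k * e k0 k) * nrm (x k0) < ?M"
    proof (cases "e k0 k = 0")
      case False
      then have "k \<notin> S"
        using maximal e_below k by blast
      then have less_M: "absK (a k) * nrm (x k) < ?M"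
        using k le_M[of k] by (auto simp: S_def)
      have "absK (a k * e k0 k) * nrm (x k0) = absK (a k) * (absK (e k0 k) * nrm (x k0))"
        by (simp add: absK_mult)
      also have "\<dots> \<le> absK (a k) * nrm (x k)"
        by (intro mult_left_mono e_small absK_nonneg)
      finally show ?thesis
        using less_M by linarith
    qed (simp add: pos)
  qed
  then have "absK r < absK (a k0)"
    unfolding k0M[symmetric] by (rule mult_right_less_imp_less) (rule nrm_nonneg)
  then have "absK (\<Sum>k\<in>F. a k * e k0 k) * nrm (x k0) = ?M"
    using sum_eq absK_add_eq_left k0M by simp
  then show ?thesis
    using k0F by blast
qed

lemma nrm_sum_scale_y:
  assumes "finite F"
  shows "nrm (\<Sum>k\<in>F. smul (a k) (y k)) = Max (insert 0 ((\<lambda>k. absK (a k) * nrm (x k)) ` F))"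
    (is "_ = ?M")
proof -
  define G where "G = (\<Union>k\<in>F. {l. e l k \<noteq> 0})"
  have G: "finite G" "F \<subseteq> G"
    using assms e_column_finite e_diag by (auto simp: G_def)
  let ?L = "insert 0 ((\<lambda>l. absK (\<Sum>k\<in>F. a k * e l k) * nrm (x l)) ` G)"
  have "nrm (\<Sum>k\<in>F. smul (a k) (y k)) = nrm (\<Sum>l\<in>G. smul (\<Sum>k\<in>F. a k * e l k) (x l))"
    using assms G(1) by (subst sum_scale_y) (auto simp: G_def)
  also have "\<dots> = Max ?L"
    using orthogonal_x G(1) unfolding orthogonal_family_def by simp
  also have "Max ?L = ?M"
  proof (rule antisym)
    have "0 \<le> ?M"
      using assms by (intro Max_ge) auto
    then show "Max ?L \<le> ?M"
      using G(1) coeff_le_Max[OF assms] by (intro Max.boundedI) auto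
    show "?M \<le> Max ?L"
    proof (cases "?M = 0")
      case True
      show ?thesis
        unfolding True using G(1) by (intro Max_ge) auto
    next
      case False
      then have "0 < ?M"
        using \<open>0 \<le> ?M\<close> by linarith
      then obtain l where "l \<in> F" and l_eq: "absK (\<Sum>k\<in>F. a k * e l k) * nrm (x l) = ?M"
        using coeff_attains_Max[OF assms] by blast
      then have "l \<in> G"
        using G(2) by blast
      then show ?thesis
        unfolding l_eq[symmetric] using G(1) by (intro Max_ge) auto
    qed
  qed
  finally show ?thesis .
qed

lemma nrm_y: "nrm (y k) = nrm (x k)"
  using nrm_sum_scale_y[of "{k}" "\<lambda>_. 1"] nrm_nonneg[of "x k"] by simp

lemma orthogonal_family_y: "orthogonal_family absK smul nrm y"
  unfolding orthogonal_family_def using nrm_sum_scale_y by (simp add: nrm_y)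

lemma x_in_span_y: "x k \<in> span (range y)"
  using wf_R
proof (induction k rule: wf_induct_rule)
  case (less k)
  let ?B = "{l. e l k \<noteq> 0} - {k}"
  have "y k = x k + (\<Sum>l\<in>?B. smul (e l k) (x l))"
    unfolding y_def by (subst sum.remove[where x = k]) (simp_all add: e_column_finite e_diag)
  then have "x k = y k - (\<Sum>l\<in>?B. smul (e l k) (x l))"
    by simp
  moreover have "(\<Sum>l\<in>?B. smul (e l k) (x l)) \<in> span (range y)"
    using less e_below by (intro span_sum span_scale) auto
  ultimately show ?case
    using span_diff[OF span_base[OF rangeI]] by simp
qed

lemma span_y:
  assumes "span (range x) = UNIV"
  shows "span (range y) = UNIV"
  using span_minimal[of "range x" "span (range y)"] x_in_span_y assms by auto

lemma orthogonal_basis_y: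
  assumes "is_basis_family smul x"
  shows "orthogonal_basis absK smul nrm y"
proof -
  have "x k \<noteq> 0" for k
    using assms dependent_zero unfolding is_basis_family_def by (metis rangeI)
  then have "y k \<noteq> 0" for k
    using nrm_y nrm_eq_0_iff by metis
  then show ?thesis
    using assms orthogonal_family_y orthogonal_family_inj orthogonal_family_independent span_y
    unfolding orthogonal_basis_def is_basis_family_def by blast
qed

end

lemma (in nonarch_normed_space) orthogonal_basis_triangular_change:
  fixes x :: "'i \<Rightarrow> 'v" and c :: "'i \<Rightarrow> 'i \<Rightarrow> 'k"
  assumes x: "orthogonal_basis absK smul nrm x" and R: "wf R"
    and finite_below: "\<And>k. finite {l. (l, k) \<in> R}"
    and small: "\<And>l k. (l, k) \<in> R \<Longrightarrow> absK (c l k) * nrm (x l) \<le> nrm (x k)"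
  shows "orthogonal_basis absK smul nrm (\<lambda>k. x k + (\<Sum>l | (l, k) \<in> R. smul (c l k) (x l)))"
    and "nrm (x k + (\<Sum>l | (l, k) \<in> R. smul (c l k) (x l))) = nrm (x k)"
proof -
  define e where "e l k = (if l = k then 1 else if (l, k) \<in> R then c l k else 0)" for l k
  have support: "{l. e l k \<noteq> 0} \<subseteq> insert k {l. (l, k) \<in> R}" for k
    by (auto simp: e_def)
  interpret T: unitriangular_change smul absK nrm x e R
  proof unfold_locales
    show "orthogonal_family absK smul nrm x"
      using x unfolding orthogonal_basis_def by blast
    show "finite {l. e l k \<noteq> 0}" for k
      using support finite_below by (meson finite_insert finite_subset)
    show "absK (e l k) * nrm (x l) \<le> nrm (x k)" for l k
      using small nrm_nonneg by (auto simp: e_def)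
  qed (auto simp: e_def R split: if_splits)
  have y_eq: "T.y k = x k + (\<Sum>l | (l, k) \<in> R. smul (c l k) (x l))" for k
  proof -
    have "T.y k = (\<Sum>l\<in>insert k {l. (l, k) \<in> R}. smul (e l k) (x l))"
      using support finite_below by (intro T.y_eq_sum) auto
    also have "\<dots> = x k + (\<Sum>l | (l, k) \<in> R. smul (e l k) (x l))"
      using finite_below R by (subst sum.insert) (auto simp: e_def)
    also have "(\<Sum>l | (l, k) \<in> R. smul (e l k) (x l)) = (\<Sum>l | (l, k) \<in> R. smul (c l k) (x l))"
      using R by (intro sum.cong) (auto simp: e_def)
    finally show ?thesis .
  qed
  have "is_basis_family smul x"
    using x unfolding orthogonal_basis_def by blast
  from T.orthogonal_basis_y[OF this]
  show "orthogonal_basis absK smul nrm (\<lambda>k. x k + (\<Sum>l | (l, k) \<in> R. smul (c l k) (x l)))"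
    unfolding y_eq[abs_def] .
  show "nrm (x k + (\<Sum>l | (l, k) \<in> R. smul (c l k) (x l))) = nrm (x k)"
    using T.nrm_y[of k] unfolding y_eq .
qed

lemma complete_ext_Qp_nonarch_normed_space:
  assumes "complete_ext_Qp absK p" "vector_space smul" "is_norm absK smul nrm"
  shows "nonarch_normed_space smul absK nrm"
  using assms unfolding complete_ext_Qp_def nonarch_normed_space_def nonarch_normed_space_axioms_def
  by auto

theorem lemma2p5:
  fixes absK :: "'k::field_char_0 \<Rightarrow> real" and p :: nat
    and smul :: "'k \<Rightarrow> 'v::ab_group_add \<Rightarrow> 'v" and nrm :: "'v \<Rightarrow> real"
    and x :: "'i \<Rightarrow> 'v" and le :: "'i \<Rightarrow> 'i \<Rightarrow> bool"
    and c :: "'i \<Rightarrow> 'i \<Rightarrow> 'k"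
  assumes K: "complete_ext_Qp absK p"
    and VS: "vector_space smul"
    and N: "is_norm absK smul nrm"
    and OB: "orthogonal_basis absK smul nrm x"
    and refl: "\<And>l. le l l"
    and antisym: "\<And>l k. le l k \<Longrightarrow> le k l \<Longrightarrow> l = k"
    and trans: "\<And>l k m. le l k \<Longrightarrow> le k m \<Longrightarrow> le l m"
    and minimal: "\<And>S. S \<noteq> {} \<Longrightarrow> \<exists>m\<in>S. \<forall>l\<in>S. le l m \<longrightarrow> l = m"
    and fin_down: "\<And>k. finite {l. le l k}"
    and mono_norm: "\<And>l k. le l k \<Longrightarrow> nrm (x l) \<le> nrm (x k)"
    and c_bound: "\<And>l k. le l k \<Longrightarrow> absK (c l k) \<le> 1"
  shows "orthogonal_basis absK smul nrm
           (\<lambda>k. x k + (\<Sum>l\<in>{l. le l k \<and> l \<noteq> k}. smul (c l k) (x l)))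
       \<and> (\<forall>k. nrm (x k + (\<Sum>l\<in>{l. le l k \<and> l \<noteq> k}. smul (c l k) (x l))) = nrm (x k))"
proof -
  interpret nonarch_normed_space smul absK nrm
    by (rule complete_ext_Qp_nonarch_normed_space[OF K VS N])
  define R where "R = {(l, k). le l k \<and> l \<noteq> k}"
  have strictly_below: "{l. (l, k) \<in> R} = {l. le l k \<and> l \<noteq> k}" for k
    by (simp add: R_def)
  have wf: "wf R"
    unfolding R_def using minimal by (rule wf_strict_if_has_minimal)
  have finite: "finite {l. (l, k) \<in> R}" for k
    unfolding strictly_below using fin_down by (rule finite_subset[rotated]) blast
  have small: "absK (c l k) * nrm (x l) \<le> nrm (x k)" if "(l, k) \<in> R" for l k
    using that mult_mono[of "absK (c l k)" 1 "nrm (x l)" "nrm (x k)"]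
    by (simp add: R_def c_bound mono_norm nrm_nonneg)
  note change = orthogonal_basis_triangular_change[OF OB wf finite small]
  show ?thesis
    using change unfolding strictly_below by simp
qed

end
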